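(* Let $V=\{v_0,\dots,v_{L-1}\}$ be a set of $L\ge1$ boolean variables and let $n_0,\dots,n_t$ ($t\ge1$) be a sequence of nodes, node $n_j$ carrying a state $s_j:V\to\{0,1\}$ (distinct nodes may carry equal states). Let the child node be $n^c=n_t$ and let the parent node be $n^p=n_k$ for some $k\in\{0,\dots,t-1\}$, and suppose the states of $n^p$ and $n^c$ differ in exactly $e$ variables. For a node $n=n_m$ in the sequence, define $$\alpha_{0:t}(n)=\frac{1}{t}\sum_{i\in\{0,\dots,t\},\,i\neq m}\delta(n,n_i),\qquad \delta(n_m,n_i)=\frac{1}{L}\sum_{l=0}^{L-1}\mathbf{1}_{s_m(v_l)\neq s_i(v_l)}.$$ Then $$\alpha_{0:t}(n^p)-\frac{t-1}{t}\frac{e}{L}\le\alpha_{0:t}(n^c)\le\alpha_{0:t}(n^p)+\frac{t-1}{t}\frac{e}{L}.$$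
   Context: $\delta$ is the normalized Hamming distance between the states of two nodes; $\alpha_{0:t}(n)$ is the average normalized Hamming distance of a node of the sequence to all other nodes of the sequence. The $e$ variables on which parent and child differ are called the effects. *)

theory Defs
  imports Complex_Main
begin

text \<open>States: s j l is the boolean value of variable v_l in the state of node n_j.
  L variables v_0..v_(L-1).\<close>

definition hdist :: "nat \<Rightarrow> (nat \<Rightarrow> nat \<Rightarrow> bool) \<Rightarrow> nat \<Rightarrow> nat \<Rightarrow> real" where
  "hdist L s m i = (1 / real L) * real (card {l. l < L \<and> s m l \<noteq> s i l})"

definition alpha :: "nat \<Rightarrow> (nat \<Rightarrow> nat \<Rightarrow> bool) \<Rightarrow> nat \<Rightarrow> nat \<Rightarrow> real" where
  "alpha L s t m = (1 / real t) * (\<Sum>i\<in>{0..t} - {m}. hdist L s m i)"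

end

theory Submission
  imports Defs
begin

text \<open>The normalised Hamming distance is a pseudometric. The averages for parent and child
  range over the same \<open>t - 1\<close> third nodes plus one common term \<open>\<delta>(n\<^sup>p, n\<^sup>c)\<close>,
  and by the triangle inequality each third node's distances to the parent and to the
  child differ by at most \<open>\<delta>(n\<^sup>p, n\<^sup>c) = e / L\<close>.\<close>

lemma hdist_commute: "hdist L s m i = hdist L s i m"
  unfolding hdist_def by metis

lemma card_differing_vars_triangle:
  fixes L :: nat and s :: "nat \<Rightarrow> nat \<Rightarrow> bool"
  shows
  "card {l. l < L \<and> s a l \<noteq> s c l}
     \<le> card {l. l < L \<and> s a l \<noteq> s b l} + card {l. l < L \<and> s b l \<noteq> s c l}"
proof -
  have "card {l. l < L \<and> s a l \<noteq> s c l}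
      \<le> card ({l. l < L \<and> s a l \<noteq> s b l} \<union> {l. l < L \<and> s b l \<noteq> s c l})"
    by (rule card_mono) (simp, blast)
  also have "\<dots> \<le> card {l. l < L \<and> s a l \<noteq> s b l} + card {l. l < L \<and> s b l \<noteq> s c l}"
    by (rule card_Un_le)
  finally show ?thesis .
qed

lemma hdist_triangle: "hdist L s a c \<le> hdist L s a b + hdist L s b c"
  using card_differing_vars_triangle[of L s a c b]
  unfolding hdist_def by (simp add: divide_right_mono flip: add_divide_distrib of_nat_add)

lemma abs_hdist_diff_le: "\<bar>hdist L s a i - hdist L s b i\<bar> \<le> hdist L s a b"
  using hdist_triangle[of L s a i b] hdist_triangle[of L s b i a] hdist_commute[of L s a b]
  by linarith

lemma alpha_eq_shared_sum:
  assumes "m \<le> t" and "k \<le> t" and "k \<noteq> m"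
  shows "alpha L s t m = (hdist L s k m + (\<Sum>i\<in>{0..t} - {k, m}. hdist L s m i)) / real t"
proof -
  have others: "{0..t} - {m} = insert k ({0..t} - {k, m})"
    using assms by auto
  show ?thesis
    unfolding alpha_def others by (subst sum.insert) (auto simp: hdist_commute[of L s m k])
qed

theorem abs_alpha_diff_le:
  assumes "m \<le> t" and "k \<le> t" and "k \<noteq> m"
  shows "\<bar>alpha L s t m - alpha L s t k\<bar> \<le> real (t - 1) / real t * hdist L s k m"
proof -
  define B where "B = {0..t} - {k, m}"
  have card_B: "card B = t - 1"
    using assms unfolding B_def by (simp add: card_Diff_subset)
  have alpha_m: "alpha L s t m = (hdist L s k m + (\<Sum>i\<in>B. hdist L s m i)) / real t"
    using alpha_eq_shared_sum[OF assms] unfolding B_def .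
  have "{0..t} - {m, k} = B"
    unfolding B_def by blast
  then have alpha_k: "alpha L s t k = (hdist L s k m + (\<Sum>i\<in>B. hdist L s k i)) / real t"
    using alpha_eq_shared_sum[of k t m L s] assms by (simp add: hdist_commute[of L s m k])
  have "alpha L s t m - alpha L s t k = (\<Sum>i\<in>B. hdist L s m i - hdist L s k i) / real t"
    unfolding alpha_m alpha_k by (simp add: sum_subtractf flip: diff_divide_distrib)
  also have "\<bar>\<dots>\<bar> \<le> (\<Sum>i\<in>B. \<bar>hdist L s m i - hdist L s k i\<bar>) / real t"
    by (simp add: divide_right_mono)
  also have "\<dots> \<le> (\<Sum>i\<in>B. hdist L s k m) / real t"
    by (intro divide_right_mono sum_mono)
      (simp_all add: abs_hdist_diff_le hdist_commute[of L s k m])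
  also have "\<dots> = real (t - 1) / real t * hdist L s k m"
    by (simp add: card_B)
  finally show ?thesis .
qed

theorem theorem4:
  fixes L t k e :: nat and s :: "nat \<Rightarrow> nat \<Rightarrow> bool"
  assumes "L \<ge> 1" and "t \<ge> 1" and "k < t"
    and "card {l. l < L \<and> s k l \<noteq> s t l} = e"
  shows "alpha L s t k - (real (t - 1) / real t) * (real e / real L) \<le> alpha L s t t
       \<and> alpha L s t t \<le> alpha L s t k + (real (t - 1) / real t) * (real e / real L)"
proof -
  have "hdist L s k t = real e / real L"
    unfolding hdist_def assms(4) by simp
  then show ?thesis
    using abs_alpha_diff_le[of t t k L s] assms(3) by (simp add: abs_le_iff)
qed

end
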